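(* Let $X$ be a strictly convex Banach space such that every finite subset of $\ell_2$ admits an isometric embedding into $X$, but $\ell_2$ does not admit an isomorphic (linear) embedding into $X$. Then $D(X)>1$; that is, there exist a locally finite metric space $A$ and a constant $C\ge 1$ such that every finite subset of $A$ admits a bilipschitz embedding into $X$ with distortion $\le C$, but $A$ admits no bilipschitz embedding into $X$ with distortion $\le C$. *)

theory Defs
  imports "HOL-Analysis.Analysis"
begin

definition strictly_convex :: "'a::real_normed_vector itself \<Rightarrow> bool" where
  "strictly_convex _ \<longleftrightarrow>
     (\<forall>x y::'a. norm x = 1 \<and> norm y = 1 \<and> x \<noteq> y \<longrightarrow> norm ((1/2) *\<^sub>R (x + y)) < 1)"

definition l2 :: "(nat \<Rightarrow> real) set" where
  "l2 = {x. summable (\<lambda>n. (x n)\<^sup>2)}"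

definition l2norm :: "(nat \<Rightarrow> real) \<Rightarrow> real" where
  "l2norm x = sqrt (\<Sum>n. (x n)\<^sup>2)"

definition l2dist :: "(nat \<Rightarrow> real) \<Rightarrow> (nat \<Rightarrow> real) \<Rightarrow> real" where
  "l2dist x y = l2norm (\<lambda>n. x n - y n)"

definition finitely_l2_isometric :: "'a::real_normed_vector itself \<Rightarrow> bool" where
  "finitely_l2_isometric _ \<longleftrightarrow>
     (\<forall>S. S \<subseteq> l2 \<and> finite S \<longrightarrow>
        (\<exists>f :: (nat \<Rightarrow> real) \<Rightarrow> 'a. \<forall>x\<in>S. \<forall>y\<in>S. norm (f x - f y) = l2dist x y))"

definition l2_isomorphic_embeds :: "'a::real_normed_vector itself \<Rightarrow> bool" where
  "l2_isomorphic_embeds _ \<longleftrightarrow>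
     (\<exists>(T :: (nat \<Rightarrow> real) \<Rightarrow> 'a) c C.
        0 < c \<and>
        (\<forall>x\<in>l2. \<forall>y\<in>l2. T (\<lambda>n. x n + y n) = T x + T y) \<and>
        (\<forall>a. \<forall>x\<in>l2. T (\<lambda>n. a * x n) = a *\<^sub>R T x) \<and>
        (\<forall>x\<in>l2. c * l2norm x \<le> norm (T x) \<and> norm (T x) \<le> C * l2norm x))"

definition bilip_embeds :: "'b set \<Rightarrow> ('b \<Rightarrow> 'b \<Rightarrow> real) \<Rightarrow> real \<Rightarrow> 'a::real_normed_vector itself \<Rightarrow> bool" where
  "bilip_embeds A d C _ \<longleftrightarrow>
     (\<exists>(f :: 'b \<Rightarrow> 'a) r. 0 < r \<and>
        (\<forall>a\<in>A. \<forall>b\<in>A. r * d a b \<le> norm (f a - f b) \<and> norm (f a - f b) \<le> C * r * d a b))"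

definition locally_finite_metric :: "'b set \<Rightarrow> ('b \<Rightarrow> 'b \<Rightarrow> real) \<Rightarrow> bool" where
  "locally_finite_metric A d \<longleftrightarrow>
     Metric_space A d \<and> (\<forall>a\<in>A. \<forall>R::real. finite {b\<in>A. d a b \<le> R})"

end

theory Submission
  imports Defs
begin

(*
  Consider the lattice points (M, a_0, a_1, ...) of l_2 with 0 <= a_j <= M and a_j = 0 for
  j >= M, with the l_2 metric. The first coordinate bounds every other one, so balls are
  finite, and finite subsets embed isometrically into X by hypothesis. An embedding of
  distortion 1 is an isometry after rescaling. In a strictly convex space metric midpoints
  are unique, and the lattice contains the configurations p = mid(0, 2p) and
  p + q = mid(2p, 2q); hence the normalised isometry is additive on the lattice and of the
  form a |-> sum a_j u_j. Then ||sum k_j u_j|| = ||k||_2 for integer, and by approximation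
  for real, coefficients, so x |-> sum x_j u_j embeds l_2 isometrically and linearly into X.
*)

lemma strictly_convex_midpoint_unique:
  fixes x y z :: "'a::real_normed_vector"
  assumes "strictly_convex TYPE('a)"
    and xz: "norm (x - z) = norm (x - y) / 2" and zy: "norm (z - y) = norm (x - y) / 2"
  shows "z = midpoint x y"
proof (cases "x = y")
  case True
  with xz show ?thesis by simp
next
  case False
  define t where "t = norm (x - y) / 2"
  have "t > 0" using False by (simp add: t_def)
  define v w where "v = (1/t) *\<^sub>R (z - x)" and "w = (1/t) *\<^sub>R (y - z)"
  have unit: "norm v = 1" "norm w = 1"
    using xz zy \<open>t > 0\<close> by (simp_all add: v_def w_def t_def norm_minus_commute)
  have "v + w = (1/t) *\<^sub>R (y - x)" by (simp add: v_def w_def algebra_simps)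
  then have "norm ((1/2) *\<^sub>R (v + w)) = 1"
    using \<open>t > 0\<close> by (simp add: t_def norm_minus_commute)
  then have "v = w" using assms(1) unit unfolding strictly_convex_def by force
  then have "z - x = y - z" using \<open>t > 0\<close> by (simp add: v_def w_def)
  then have "x + y = 2 *\<^sub>R z" by (simp add: scaleR_2 algebra_simps)
  then show ?thesis by (simp add: midpoint_def)
qed

lemma l2dist_eq_L2_set:
  assumes "\<forall>i\<ge>n. x i = 0" and "\<forall>i\<ge>n. y i = 0"
  shows "l2dist x y = L2_set (\<lambda>i. x i - y i) {..<n}"
  unfolding l2dist_def l2norm_def L2_set_def
  using assms by (subst suminf_finite[of "{..<n}"]) auto

lemma tendsto_floor_scaled:
  "(\<lambda>m. of_int \<lfloor>real (Suc m) * x\<rfloor> / real (Suc m)) \<longlonglongrightarrow> (x::real)"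
proof (rule tendsto_sandwich[of "\<lambda>m. x - 1 / real (Suc m)" _ _ "\<lambda>m. x"])
  have "x - 1 / real (Suc m) \<le> of_int \<lfloor>real (Suc m) * x\<rfloor> / real (Suc m)" for m
  proof -
    have "x - 1 / real (Suc m) = (real (Suc m) * x - 1) / real (Suc m)"
      by (simp add: field_simps)
    also have "\<dots> \<le> of_int \<lfloor>real (Suc m) * x\<rfloor> / real (Suc m)"
      by (intro divide_right_mono) linarith+
    finally show ?thesis .
  qed
  then show "\<forall>\<^sub>F m in sequentially. x - 1 / real (Suc m) \<le> of_int \<lfloor>real (Suc m) * x\<rfloor> / real (Suc m)"
    by simp
  have "of_int \<lfloor>real (Suc m) * x\<rfloor> \<le> real (Suc m) * x" for m
    by linarith
  then show "\<forall>\<^sub>F m in sequentially. of_int \<lfloor>real (Suc m) * x\<rfloor> / real (Suc m) \<le> x"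
    by (simp add: field_simps del: of_nat_Suc)
  show "(\<lambda>m. x - 1 / real (Suc m)) \<longlonglongrightarrow> x"
    using tendsto_diff[OF tendsto_const LIMSEQ_Suc[OF lim_1_over_n], of x] by simp
qed simp

lemma norm_sum_scaleR_eq_L2_set:
  fixes u :: "nat \<Rightarrow> 'a::real_normed_vector"
  assumes int: "\<And>k :: nat \<Rightarrow> int. norm (\<Sum>j<n. of_int (k j) *\<^sub>R u j) = L2_set (\<lambda>j. of_int (k j)) {..<n}"
  shows "norm (\<Sum>j<n. c j *\<^sub>R u j) = L2_set c {..<n}"
proof -
  define k where "k m j = \<lfloor>real (Suc m) * c j\<rfloor>" for m j
  define q where "q m = (\<lambda>j. of_int (k m j) / real (Suc m))" for m
  have "norm (\<Sum>j<n. q m j *\<^sub>R u j) = L2_set (q m) {..<n}" for m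
  proof -
    have "(\<Sum>j<n. q m j *\<^sub>R u j) = (1 / real (Suc m)) *\<^sub>R (\<Sum>j<n. of_int (k m j) *\<^sub>R u j)"
      by (simp add: q_def scaleR_sum_right)
    then have "norm (\<Sum>j<n. q m j *\<^sub>R u j) = (1 / real (Suc m)) * L2_set (\<lambda>j. of_int (k m j)) {..<n}"
      by (simp add: int)
    also have "\<dots> = L2_set (\<lambda>j. (1 / real (Suc m)) * of_int (k m j)) {..<n}"
      by (rule L2_set_right_distrib) simp
    also have "\<dots> = L2_set (q m) {..<n}"
      by (simp add: q_def)
    finally show ?thesis .
  qed
  moreover have "(\<lambda>m. q m j) \<longlonglongrightarrow> c j" for j
    unfolding q_def k_def by (rule tendsto_floor_scaled)
  then have "(\<lambda>m. norm (\<Sum>j<n. q m j *\<^sub>R u j)) \<longlonglongrightarrow> norm (\<Sum>j<n. c j *\<^sub>R u j)"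
    and "(\<lambda>m. L2_set (q m) {..<n}) \<longlonglongrightarrow> L2_set c {..<n}"
    unfolding L2_set_def by (auto intro!: tendsto_intros)
  ultimately show ?thesis using LIMSEQ_unique by simp
qed

lemma l2_isomorphic_embedsI:
  fixes u :: "nat \<Rightarrow> 'a::banach"
  assumes isometric: "\<And>c n. norm (\<Sum>j<n. c j *\<^sub>R u j) = L2_set c {..<n}"
  shows "l2_isomorphic_embeds TYPE('a)"
proof -
  have tail: "norm (\<Sum>j\<in>{m..<n}. c j *\<^sub>R u j) = L2_set c {m..<n}" for c m n
  proof -
    have restrict: "{j. j < n \<and> m \<le> j} = {m..<n}" by auto
    have "(\<Sum>j<n. (if m \<le> j then c j else 0) *\<^sub>R u j) = (\<Sum>j<n. if m \<le> j then c j *\<^sub>R u j else 0)"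
      by (rule sum.cong) auto
    also have "\<dots> = (\<Sum>j\<in>{m..<n}. c j *\<^sub>R u j)"
      by (simp add: sum.inter_filter[symmetric] restrict)
    moreover have "L2_set (\<lambda>j. if m \<le> j then c j else 0) {..<n} = L2_set c {m..<n}"
      by (simp add: L2_set_def sum.inter_filter[symmetric] restrict if_distrib[of power2] cong: if_cong)
    ultimately show ?thesis by (metis isometric)
  qed
  have summable: "summable (\<lambda>j. x j *\<^sub>R u j)" if "x \<in> l2" for x
    unfolding summable_Cauchy
  proof (intro allI impI)
    fix e :: real
    assume "e > 0"
    have "summable (\<lambda>j. (x j)\<^sup>2)" using that by (simp add: l2_def)
    then obtain N where N: "\<forall>m\<ge>N. \<forall>n. norm (\<Sum>j\<in>{m..<n}. (x j)\<^sup>2) < e\<^sup>2"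
      using \<open>e > 0\<close> unfolding summable_Cauchy by (meson zero_less_power)
    have "norm (\<Sum>j\<in>{m..<n}. x j *\<^sub>R u j) < e" if "m \<ge> N" for m n
    proof -
      have "(\<Sum>j\<in>{m..<n}. (x j)\<^sup>2) < e\<^sup>2" using N that by (simp add: sum_nonneg)
      then have "sqrt (\<Sum>j\<in>{m..<n}. (x j)\<^sup>2) < e"
        using \<open>e > 0\<close> real_sqrt_less_mono by fastforce
      then show ?thesis by (simp add: tail L2_set_def)
    qed
    then show "\<exists>N. \<forall>m\<ge>N. \<forall>n. norm (\<Sum>j\<in>{m..<n}. x j *\<^sub>R u j) < e" by blast
  qed
  define T where "T x = (\<Sum>j. x j *\<^sub>R u j)" for x :: "nat \<Rightarrow> real"
  have "norm (T x) = l2norm x" if "x \<in> l2" for x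
  proof -
    have "(\<lambda>n. norm (\<Sum>j<n. x j *\<^sub>R u j)) \<longlonglongrightarrow> norm (T x)"
      unfolding T_def by (intro tendsto_intros summable_LIMSEQ summable that)
    moreover have "summable (\<lambda>j. (x j)\<^sup>2)" using that by (simp add: l2_def)
    then have "(\<lambda>n. L2_set x {..<n}) \<longlonglongrightarrow> l2norm x"
      unfolding l2norm_def L2_set_def by (intro tendsto_intros summable_LIMSEQ)
    ultimately show ?thesis using LIMSEQ_unique by (simp add: isometric)
  qed
  moreover have "T (\<lambda>j. x j + y j) = T x + T y" if "x \<in> l2" "y \<in> l2" for x y
    using suminf_add[OF summable summable] that by (simp add: T_def scaleR_add_left)
  moreover have "T (\<lambda>j. a * x j) = a *\<^sub>R T x" if "x \<in> l2" for a x
    using suminf_scaleR_right[OF summable] that by (simp add: T_def)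
  ultimately show ?thesis unfolding l2_isomorphic_embeds_def
    by (intro exI[of _ T] exI[of _ 1]) auto
qed

lemma bilip_embeds_reindex:
  assumes "inj_on h A"
  shows "bilip_embeds A (\<lambda>a b. \<delta> (h a) (h b)) C TYPE('a::real_normed_vector)
    \<longleftrightarrow> bilip_embeds (h ` A) \<delta> C TYPE('a)"
proof
  assume "bilip_embeds A (\<lambda>a b. \<delta> (h a) (h b)) C TYPE('a)"
  then obtain f :: "_ \<Rightarrow> 'a" and r where "0 < r" and
    f: "\<forall>a\<in>A. \<forall>b\<in>A. r * \<delta> (h a) (h b) \<le> norm (f a - f b) \<and> norm (f a - f b) \<le> C * r * \<delta> (h a) (h b)"
    unfolding bilip_embeds_def by blast
  have "\<forall>x\<in>h ` A. \<forall>y\<in>h ` A. r * \<delta> x y \<le> norm ((f \<circ> inv_into A h) x - (f \<circ> inv_into A h) y)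
      \<and> norm ((f \<circ> inv_into A h) x - (f \<circ> inv_into A h) y) \<le> C * r * \<delta> x y"
    using f by (simp add: inv_into_f_f[OF assms])
  with \<open>0 < r\<close> show "bilip_embeds (h ` A) \<delta> C TYPE('a)"
    unfolding bilip_embeds_def by blast
next
  assume "bilip_embeds (h ` A) \<delta> C TYPE('a)"
  then obtain f :: "_ \<Rightarrow> 'a" and r where "0 < r" and
    "\<forall>x\<in>h ` A. \<forall>y\<in>h ` A. r * \<delta> x y \<le> norm (f x - f y) \<and> norm (f x - f y) \<le> C * r * \<delta> x y"
    unfolding bilip_embeds_def by blast
  then show "bilip_embeds A (\<lambda>a b. \<delta> (h a) (h b)) C TYPE('a)"
    unfolding bilip_embeds_def by (intro exI[of _ "f \<circ> h"] exI[of _ r]) simp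
qed

lemma locally_finite_metric_reindex:
  assumes "inj_on h A" and "locally_finite_metric (h ` A) \<delta>"
  shows "locally_finite_metric A (\<lambda>a b. \<delta> (h a) (h b))"
proof -
  interpret Metric_space "h ` A" \<delta>
    using assms(2) by (simp add: locally_finite_metric_def)
  have "Metric_space A (\<lambda>a b. \<delta> (h a) (h b))"
  proof
    fix a b c
    assume "a \<in> A" "b \<in> A" "c \<in> A"
    then show "\<delta> (h a) (h c) \<le> \<delta> (h a) (h b) + \<delta> (h b) (h c)" by (simp add: triangle)
  next
    fix a b
    assume "a \<in> A" "b \<in> A"
    then show "\<delta> (h a) (h b) = 0 \<longleftrightarrow> a = b" by (simp add: inj_on_eq_iff[OF assms(1)])
  qed (simp_all add: commute)
  moreover have "finite {b\<in>A. \<delta> (h a) (h b) \<le> R}" if "a \<in> A" for a R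
  proof (rule finite_imageD)
    have "h ` {b\<in>A. \<delta> (h a) (h b) \<le> R} \<subseteq> {y\<in>h ` A. \<delta> (h a) y \<le> R}" by auto
    then show "finite (h ` {b\<in>A. \<delta> (h a) (h b) \<le> R})"
      using assms(2) that unfolding locally_finite_metric_def by (meson finite_subset imageI)
    show "inj_on h {b\<in>A. \<delta> (h a) (h b) \<le> R}"
      using assms(1) by (rule inj_on_subset) auto
  qed
  ultimately show ?thesis by (simp add: locally_finite_metric_def)
qed

text \<open>The grid point p is the lattice point (M, a_0, a_1, ...) = (p 0, p 1, p 2, ...).\<close>

definition grid :: "(nat \<Rightarrow> nat) set" where
  "grid = {p. \<forall>j. p (Suc j) \<le> p 0 \<and> (p 0 \<le> j \<longrightarrow> p (Suc j) = 0)}"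

text \<open>Grid points vanish beyond index p 0, so this is their l_2 distance
  (grid_dist_eq_l2dist). Unlike l2dist, whose series has a junk value off l_2, it is
  nonnegative for all arguments, as Metric_space demands.\<close>

definition grid_dist :: "(nat \<Rightarrow> nat) \<Rightarrow> (nat \<Rightarrow> nat) \<Rightarrow> real" where
  "grid_dist p q = L2_set (\<lambda>i. real (p i) - real (q i)) {..<Suc (max (p 0) (q 0))}"

definition grid_axis :: "nat \<Rightarrow> nat \<Rightarrow> nat" where
  "grid_axis k i = (if i = 0 then k else 0)"

lemma grid_vanishes: "p \<in> grid \<Longrightarrow> p 0 < i \<Longrightarrow> p i = 0"
  by (cases i) (auto simp: grid_def)

lemma grid_le: "p \<in> grid \<Longrightarrow> p i \<le> p 0"
  by (cases i) (auto simp: grid_def)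

lemma grid_add: "p \<in> grid \<Longrightarrow> q \<in> grid \<Longrightarrow> (\<lambda>i. p i + q i) \<in> grid"
  by (auto simp: grid_def add_mono)

lemma zero_in_grid: "(\<lambda>_. 0) \<in> grid"
  by (simp add: grid_def)

lemma grid_scale:
  assumes "p \<in> grid" shows "(\<lambda>i. k * p i) \<in> grid"
  unfolding grid_def
proof (intro CollectI allI conjI impI)
  fix j
  show "k * p (Suc j) \<le> k * p 0" using grid_le[OF assms] by simp
  assume "k * p 0 \<le> j"
  then have "k = 0 \<or> p 0 \<le> j" by (cases k) auto
  then show "k * p (Suc j) = 0" using assms by (auto simp: grid_def)
qed

lemma grid_axis_in_grid: "grid_axis k \<in> grid"
  by (simp add: grid_def grid_axis_def)

lemma grid_sum: "(\<And>j. j \<in> J \<Longrightarrow> v j \<in> grid) \<Longrightarrow> (\<lambda>i. \<Sum>j\<in>J. k j * v j i) \<in> grid"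
proof (induction J rule: infinite_finite_induct)
  case (infinite J)
  then show ?case by (simp add: zero_in_grid)
next
  case empty
  then show ?case by (simp add: zero_in_grid)
next
  case (insert j J)
  then show ?case by (simp add: grid_add grid_scale)
qed

lemma grid_axis_plus_unit_in_grid: "(\<lambda>i. grid_axis (Suc j) i + (if i = j then 1 else 0)) \<in> grid"
  by (auto simp: grid_def grid_axis_def)

lemma grid_dist_eq_l2dist:
  "p \<in> grid \<Longrightarrow> q \<in> grid \<Longrightarrow> grid_dist p q = l2dist (\<lambda>i. real (p i)) (\<lambda>i. real (q i))"
  unfolding grid_dist_def
  by (subst l2dist_eq_L2_set[where n = "Suc (max (p 0) (q 0))"]) (auto intro: grid_vanishes)

lemma grid_dist_eq_L2_set:
  assumes "p \<in> grid" "q \<in> grid" "\<forall>i\<ge>n. p i = 0" "\<forall>i\<ge>n. q i = 0"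
  shows "grid_dist p q = L2_set (\<lambda>i. real (p i) - real (q i)) {..<n}"
  using assms by (simp add: grid_dist_eq_l2dist l2dist_eq_L2_set)

lemma grid_dist_commute: "grid_dist p q = grid_dist q p"
  unfolding grid_dist_def L2_set_def by (simp add: max.commute power2_commute)

lemma grid_height_le_dist: "real (p 0) - real (q 0) \<le> grid_dist p q"
  unfolding grid_dist_def by (rule member_le_L2_set) auto

lemma finite_grid_height: "finite {p\<in>grid. p 0 \<le> K}"
proof (rule finite_subset)
  show "{p\<in>grid. p 0 \<le> K} \<subseteq> {p. \<forall>i. (i \<in> {..K} \<longrightarrow> p i \<in> {..K}) \<and> (i \<notin> {..K} \<longrightarrow> p i = 0)}"
  proof (intro subsetI CollectI allI conjI impI)
    fix p i
    assume "p \<in> {p\<in>grid. p 0 \<le> K}"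
    then have "p \<in> grid" "p 0 \<le> K" by auto
    show "p i \<in> {..K}" using grid_le[OF \<open>p \<in> grid\<close>, of i] \<open>p 0 \<le> K\<close> by simp
    show "i \<notin> {..K} \<Longrightarrow> p i = 0" using grid_vanishes[OF \<open>p \<in> grid\<close>, of i] \<open>p 0 \<le> K\<close> by simp
  qed
qed (rule finite_set_of_finite_funs; simp)

lemma countable_grid: "countable grid"
proof -
  have "grid = (\<Union>K. {p\<in>grid. p 0 \<le> K})" by auto
  also have "countable \<dots>"
    by (simp add: countable_finite finite_grid_height)
  finally show ?thesis .
qed

lemma infinite_grid: "infinite grid"
proof -
  have "inj grid_axis"
    by (rule injI) (drule fun_cong[of _ _ 0], simp add: grid_axis_def)
  then have "infinite (range grid_axis)" by (rule range_inj_infinite)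
  then show ?thesis by (rule infinite_super[rotated]) (auto intro: grid_axis_in_grid)
qed

lemma locally_finite_grid: "locally_finite_metric grid grid_dist"
proof -
  have "Metric_space grid grid_dist"
  proof
    fix p q r
    assume pqr: "p \<in> grid" "q \<in> grid" "r \<in> grid"
    define n where "n = Suc (p 0 + q 0 + r 0)"
    have vanish: "\<forall>i\<ge>n. p i = 0" "\<forall>i\<ge>n. q i = 0" "\<forall>i\<ge>n. r i = 0"
      using pqr by (auto simp: n_def intro: grid_vanishes)
    have "grid_dist p r = L2_set (\<lambda>i. (real (p i) - real (q i)) + (real (q i) - real (r i))) {..<n}"
      using grid_dist_eq_L2_set[of p r n] pqr vanish by simp
    also have "\<dots> \<le> L2_set (\<lambda>i. real (p i) - real (q i)) {..<n} + L2_set (\<lambda>i. real (q i) - real (r i)) {..<n}"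
      by (rule L2_set_triangle_ineq)
    also have "\<dots> = grid_dist p q + grid_dist q r"
      using grid_dist_eq_L2_set[of p q n] grid_dist_eq_L2_set[of q r n] pqr vanish by simp
    finally show "grid_dist p r \<le> grid_dist p q + grid_dist q r" .
  next
    fix p q
    assume "p \<in> grid" "q \<in> grid"
    show "grid_dist p q = 0 \<longleftrightarrow> p = q"
    proof
      assume "grid_dist p q = 0"
      then have low: "p i = q i" if "i \<le> max (p 0) (q 0)" for i
        using that by (simp add: grid_dist_def L2_set_eq_0_iff)
      show "p = q"
      proof
        fix i
        show "p i = q i"
          using low[of i] grid_vanishes[OF \<open>p \<in> grid\<close>, of i] grid_vanishes[OF \<open>q \<in> grid\<close>, of i]
          by (cases "i \<le> max (p 0) (q 0)") auto
      qed
    qed (simp add: grid_dist_def L2_set_0')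
  qed (simp_all add: grid_dist_def grid_dist_commute[unfolded grid_dist_def])
  moreover have "finite {q\<in>grid. grid_dist p q \<le> R}" for p R
  proof (rule finite_subset)
    show "{q\<in>grid. grid_dist p q \<le> R} \<subseteq> {q\<in>grid. q 0 \<le> nat \<lceil>real (p 0) + R\<rceil>}"
    proof (intro subsetI CollectI conjI)
      fix q
      assume q: "q \<in> {q\<in>grid. grid_dist p q \<le> R}"
      then show "q \<in> grid" by simp
      have "real (q 0) \<le> real (p 0) + R"
        using grid_height_le_dist[of q p] grid_dist_commute[of p q] q by simp
      then have "real (q 0) \<le> real (nat \<lceil>real (p 0) + R\<rceil>)"
        using real_nat_ceiling_ge order_trans by blast
      then show "q 0 \<le> nat \<lceil>real (p 0) + R\<rceil>" by (simp only: of_nat_le_iff)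
    qed
  qed (rule finite_grid_height)
  ultimately show ?thesis by (simp add: locally_finite_metric_def)
qed

locale grid_isometry =
  fixes f :: "(nat \<Rightarrow> nat) \<Rightarrow> 'a::real_normed_vector"
  assumes strictly_convex: "strictly_convex TYPE('a)"
    and isometric: "\<And>p q. p \<in> grid \<Longrightarrow> q \<in> grid \<Longrightarrow> norm (f p - f q) = grid_dist p q"
    and origin: "f (\<lambda>_. 0) = 0"
begin

lemma map_midpoint:
  assumes grid: "p \<in> grid" "q \<in> grid" "m \<in> grid" and mid: "\<And>i. 2 * m i = p i + q i"
  shows "f m = midpoint (f p) (f q)"
proof (rule strictly_convex_midpoint_unique[OF strictly_convex])
  define n where "n = Suc (p 0 + q 0 + m 0)"
  have vanish: "\<forall>i\<ge>n. p i = 0" "\<forall>i\<ge>n. q i = 0" "\<forall>i\<ge>n. m i = 0"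
    using grid by (auto simp: n_def intro: grid_vanishes)
  have "real (2 * m i) = real (p i + q i)" for i using mid by presburger
  then have "real (p i) - real (m i) = (real (p i) - real (q i)) * (1/2)"
    and "real (m i) - real (q i) = (real (p i) - real (q i)) * (1/2)" for i
    by (simp_all add: field_simps)
  then have "grid_dist p m = grid_dist p q * (1/2)" and "grid_dist m q = grid_dist p q * (1/2)"
    using grid vanish by (simp_all add: grid_dist_eq_L2_set[of _ _ n] L2_set_left_distrib)
  then show "norm (f p - f m) = norm (f p - f q) / 2" and "norm (f m - f q) = norm (f p - f q) / 2"
    using grid by (simp_all add: isometric)
qed

lemma map_double: "p \<in> grid \<Longrightarrow> f (\<lambda>i. 2 * p i) = 2 *\<^sub>R f p"
  using map_midpoint[of "\<lambda>_. 0" "\<lambda>i. 2 * p i" p]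
  by (simp add: zero_in_grid grid_scale origin midpoint_def)

lemma map_add:
  assumes "p \<in> grid" "q \<in> grid"
  shows "f (\<lambda>i. p i + q i) = f p + f q"
proof -
  have "f (\<lambda>i. p i + q i) = midpoint (f (\<lambda>i. 2 * p i)) (f (\<lambda>i. 2 * q i))"
    using assms by (intro map_midpoint) (auto intro: grid_add grid_scale)
  then show ?thesis by (simp add: assms map_double midpoint_def scaleR_add_right[symmetric])
qed

lemma map_scale: "p \<in> grid \<Longrightarrow> f (\<lambda>i. k * p i) = real k *\<^sub>R f p"
proof (induction k)
  case 0
  then show ?case by (simp add: origin)
next
  case (Suc k)
  then show ?case by (simp add: map_add grid_scale algebra_simps)
qed

lemma map_sum:
  assumes "finite J" and "\<And>j. j \<in> J \<Longrightarrow> v j \<in> grid"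
  shows "f (\<lambda>i. \<Sum>j\<in>J. k j * v j i) = (\<Sum>j\<in>J. real (k j) *\<^sub>R f (v j))"
  using assms
proof (induction J rule: finite_induct)
  case empty
  then show ?case by (simp add: origin)
next
  case (insert j J)
  then show ?case by (simp add: map_add map_scale grid_scale grid_sum)
qed

text \<open>The unit vector e_j is not a grid point, but grid_axis (Suc j) and
  grid_axis (Suc j) + e_j are.\<close>

definition basis :: "nat \<Rightarrow> 'a" where
  "basis j = f (\<lambda>i. grid_axis (Suc j) i + (if i = j then 1 else 0)) - f (grid_axis (Suc j))"

lemma map_eq_sum_basis:
  assumes "p \<in> grid" and vanish: "\<forall>i\<ge>n. p i = 0"
  shows "f p = (\<Sum>j<n. real (p j) *\<^sub>R basis j)"
proof -
  define e where "e j = (\<lambda>i. grid_axis (Suc j) i + (if i = j then 1 else 0))" for j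
  \<comment> \<open>Both sides of p + sum_j p_j c_j = sum_j p_j (c_j + e_j), with c_j = grid_axis (Suc j),
    are sums of grid points.\<close>
  have "(\<Sum>j<n. p j * (if i = j then 1 else 0)) = p i" for i
    using vanish by (cases "i < n") (simp_all add: if_distrib[of "(*) _"] cong: if_cong)
  then have "(\<lambda>i. p i + (\<Sum>j<n. p j * grid_axis (Suc j) i)) = (\<lambda>i. \<Sum>j<n. p j * e j i)"
    by (simp add: e_def distrib_left sum.distrib add.commute)
  moreover have "f (\<lambda>i. p i + (\<Sum>j<n. p j * grid_axis (Suc j) i)) = f p + f (\<lambda>i. \<Sum>j<n. p j * grid_axis (Suc j) i)"
    by (rule map_add[OF assms(1) grid_sum]) (rule grid_axis_in_grid)
  ultimately have "f p + f (\<lambda>i. \<Sum>j<n. p j * grid_axis (Suc j) i) = f (\<lambda>i. \<Sum>j<n. p j * e j i)"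
    by simp
  then have "f p + (\<Sum>j<n. real (p j) *\<^sub>R f (grid_axis (Suc j))) = (\<Sum>j<n. real (p j) *\<^sub>R f (e j))"
    by (simp add: map_sum grid_axis_in_grid e_def grid_axis_plus_unit_in_grid)
  then show ?thesis
    by (simp add: basis_def e_def scaleR_diff_right sum_subtractf eq_diff_eq)
qed

lemma norm_sum_basis_of_int:
  fixes k :: "nat \<Rightarrow> int"
  shows "norm (\<Sum>j<n. of_int (k j) *\<^sub>R basis j) = L2_set (\<lambda>j. of_int (k j)) {..<n}"
proof (cases "n = 0")
  case True
  then show ?thesis by simp
next
  case False
  \<comment> \<open>Write k as a difference of two grid points lifted to a common height N.\<close>
  define N where "N = n + (\<Sum>j<n. nat \<bar>k j\<bar>)"
  define p q where "p i = (if i = 0 then N else 0) + (if i < n then nat (k i) else 0)"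
    and "q i = (if i = 0 then N else 0) + (if i < n then nat (- k i) else 0)" for i
  have bound: "nat (k j) \<le> N \<and> nat (- k j) \<le> N" if "j < n" for j
  proof -
    have "nat \<bar>k j\<bar> \<le> (\<Sum>j<n. nat \<bar>k j\<bar>)" using that by (intro member_le_sum) auto
    then show ?thesis by (auto simp: N_def)
  qed
  have "n \<le> N" by (simp add: N_def)
  then have grid: "p \<in> grid" "q \<in> grid"
    by (auto simp: grid_def p_def q_def intro: trans_le_add1 dest: bound)
  have vanish: "\<forall>i\<ge>n. p i = 0" "\<forall>i\<ge>n. q i = 0"
    using False by (auto simp: p_def q_def)
  have diff: "real (p j) - real (q j) = of_int (k j)" if "j < n" for j
    using that by (cases "k j \<ge> 0") (auto simp: p_def q_def)
  have "f p - f q = (\<Sum>j<n. (real (p j) - real (q j)) *\<^sub>R basis j)"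
    using grid vanish by (simp add: map_eq_sum_basis[of _ n] scaleR_diff_left sum_subtractf)
  also have "\<dots> = (\<Sum>j<n. of_int (k j) *\<^sub>R basis j)"
    using diff by simp
  finally have "f p - f q = (\<Sum>j<n. of_int (k j) *\<^sub>R basis j)" .
  moreover have "norm (f p - f q) = L2_set (\<lambda>j. real (p j) - real (q j)) {..<n}"
    using grid vanish by (simp add: isometric grid_dist_eq_L2_set)
  moreover have "\<dots> = L2_set (\<lambda>j. of_int (k j)) {..<n}"
    using diff by (intro L2_set_cong) auto
  ultimately show ?thesis by simp
qed

end

lemma l2_isomorphic_embeds_if_grid_isometry:
  fixes f :: "(nat \<Rightarrow> nat) \<Rightarrow> 'a::banach"
  assumes "grid_isometry f"
  shows "l2_isomorphic_embeds TYPE('a)"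
  by (rule l2_isomorphic_embedsI, rule norm_sum_scaleR_eq_L2_set)
    (rule grid_isometry.norm_sum_basis_of_int[OF assms])

lemma grid_isometry_if_bilip_embeds:
  assumes "strictly_convex TYPE('a::real_normed_vector)"
    and "bilip_embeds grid grid_dist 1 TYPE('a)"
  shows "\<exists>f :: (nat \<Rightarrow> nat) \<Rightarrow> 'a. grid_isometry f"
proof -
  obtain g :: "(nat \<Rightarrow> nat) \<Rightarrow> 'a" and r where "0 < r" and g:
    "\<forall>p\<in>grid. \<forall>q\<in>grid. r * grid_dist p q \<le> norm (g p - g q) \<and> norm (g p - g q) \<le> 1 * r * grid_dist p q"
    using assms(2) unfolding bilip_embeds_def by blast
  define f where "f p = (1/r) *\<^sub>R (g p - g (\<lambda>_. 0))" for p
  have "grid_isometry f"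
  proof
    fix p q
    assume "p \<in> grid" "q \<in> grid"
    then have "norm (g p - g q) = r * grid_dist p q" using g by (simp add: order_antisym)
    moreover have "f p - f q = (1/r) *\<^sub>R (g p - g q)" by (simp add: f_def algebra_simps)
    ultimately show "norm (f p - f q) = grid_dist p q" using \<open>0 < r\<close> by simp
  qed (simp_all add: assms(1) f_def)
  then show ?thesis by blast
qed

lemma not_bilip_embeds_grid:
  assumes "strictly_convex TYPE('a::banach)" and "\<not> l2_isomorphic_embeds TYPE('a)"
  shows "\<not> bilip_embeds grid grid_dist 1 TYPE('a)"
  using grid_isometry_if_bilip_embeds[OF assms(1)] l2_isomorphic_embeds_if_grid_isometry assms(2)
  by blast

lemma grid_in_l2:
  assumes "p \<in> grid" shows "(\<lambda>i. real (p i)) \<in> l2"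
  unfolding l2_def
  by (rule CollectI, rule summable_finite[of "{..p 0}"]) (simp_all add: grid_vanishes[OF assms])

lemma bilip_embeds_finite_grid:
  assumes "finitely_l2_isometric TYPE('a::real_normed_vector)" and "G \<subseteq> grid" "finite G"
  shows "bilip_embeds G grid_dist 1 TYPE('a)"
proof -
  have "(\<lambda>p i. real (p i)) ` G \<subseteq> l2" using assms(2) grid_in_l2 by auto
  then obtain f :: "(nat \<Rightarrow> real) \<Rightarrow> 'a" where
    "\<forall>x\<in>(\<lambda>p i. real (p i)) ` G. \<forall>y\<in>(\<lambda>p i. real (p i)) ` G. norm (f x - f y) = l2dist x y"
    using assms(1,3) unfolding finitely_l2_isometric_def by blast
  moreover have "grid_dist p q = l2dist (\<lambda>i. real (p i)) (\<lambda>i. real (q i))" if "p \<in> G" "q \<in> G" for p q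
    using that assms(2) by (intro grid_dist_eq_l2dist) auto
  ultimately have "\<forall>p\<in>G. \<forall>q\<in>G. norm (f (\<lambda>i. real (p i)) - f (\<lambda>i. real (q i))) = grid_dist p q"
    by simp
  then show ?thesis
    unfolding bilip_embeds_def by (intro exI[of _ "\<lambda>p. f (\<lambda>i. real (p i))"] exI[of _ 1]) simp
qed

theorem theorem1p7:
  assumes "strictly_convex TYPE('a::banach)"
    and "finitely_l2_isometric TYPE('a)"
    and "\<not> l2_isomorphic_embeds TYPE('a)"
  shows "\<exists>(A :: nat set) (d :: nat \<Rightarrow> nat \<Rightarrow> real) C.
           locally_finite_metric A d \<and> 1 \<le> C \<and>
           (\<forall>F. F \<subseteq> A \<and> finite F \<longrightarrow> bilip_embeds F d C TYPE('a)) \<and>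
           \<not> bilip_embeds A d C TYPE('a)"
proof -
  define h where "h = from_nat_into grid"
  have "bij_betw h UNIV grid"
    unfolding h_def by (rule bij_betw_from_nat_into[OF countable_grid infinite_grid])
  then have inj: "inj_on h F" and onto: "h ` UNIV = grid" for F
    by (auto simp: bij_betw_def intro: inj_on_subset)
  define d where "d i j = grid_dist (h i) (h j)" for i j
  have "locally_finite_metric UNIV d"
    using locally_finite_metric_reindex[OF inj[of UNIV], of grid_dist] locally_finite_grid onto
    by (simp add: d_def[abs_def])
  moreover have "bilip_embeds F d 1 TYPE('a)" if "finite F" for F
  proof -
    have "h ` F \<subseteq> grid" using onto by blast
    then have "bilip_embeds (h ` F) grid_dist 1 TYPE('a)"
      using bilip_embeds_finite_grid[OF assms(2)] that by blast
    then show ?thesis unfolding d_def[abs_def] by (subst bilip_embeds_reindex[OF inj])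
  qed
  moreover have "\<not> bilip_embeds UNIV d 1 TYPE('a)"
    using not_bilip_embeds_grid[OF assms(1,3)] bilip_embeds_reindex[OF inj, where 'a = 'a] onto
    by (simp add: d_def[abs_def])
  ultimately show ?thesis by (intro exI[of _ UNIV] exI[of _ d] exI[of _ 1]) simp
qed

end
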